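(* Let $s\ge 2$. Suppose the edges of the complete graph $K_s$ are coloured with $s-1$ colours such that each colour class is a matching and every set of $4$ vertices spans edges of either exactly $3$ or exactly $6$ different colours. Then $s=2^p$ for some integer $p$. *)

theory Defs
  imports Main
begin

definition edge_colouring :: "nat \<Rightarrow> nat \<Rightarrow> (nat \<Rightarrow> nat \<Rightarrow> nat) \<Rightarrow> bool" where
  "edge_colouring s k c \<longleftrightarrow>
     (\<forall>u<s. \<forall>v<s. u \<noteq> v \<longrightarrow> c u v = c v u \<and> c u v < k)"

definition classes_are_matchings :: "nat \<Rightarrow> (nat \<Rightarrow> nat \<Rightarrow> nat) \<Rightarrow> bool" where
  "classes_are_matchings s c \<longleftrightarrow>
     (\<forall>u<s. \<forall>v<s. \<forall>w<s. u \<noteq> v \<and> u \<noteq> w \<and> v \<noteq> w \<longrightarrow> c u v \<noteq> c u w)"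

definition colours_spanned :: "(nat \<Rightarrow> nat \<Rightarrow> nat) \<Rightarrow> nat set \<Rightarrow> nat set" where
  "colours_spanned c X = {c u v | u v. u \<in> X \<and> v \<in> X \<and> u \<noteq> v}"

end

theory Submission
  imports Defs
begin

text \<open>Give every loop the colour s - 1, which no edge uses. Then every vertex sees each of the
  s colours exactly once, so the colouring becomes a symmetric Latin square with constant
  diagonal, and the condition on 4-sets yields the quadrangle rule: if ab and xy have the same
  colour, so do ax and by. Up to renaming the symbols, such a square is the Cayley table of an
  abelian group in which every element is its own inverse: the product of x and y is the vertex
  joined to y by the colour of the edge 0 x.
  In a finite group of this kind, a subgroup H and an element g outside it generate the subgroup
  H \<union> g H of twice the size, so its order is a power of 2.\<close>

locale boolean_group =
  fixes G :: "'a set" and mult :: "'a \<Rightarrow> 'a \<Rightarrow> 'a" (infixl "\<cdot>" 70) and e :: 'a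
  assumes mult_closed: "x \<in> G \<Longrightarrow> y \<in> G \<Longrightarrow> x \<cdot> y \<in> G"
    and unit_closed: "e \<in> G"
    and left_unit: "x \<in> G \<Longrightarrow> e \<cdot> x = x"
    and mult_commute: "x \<in> G \<Longrightarrow> y \<in> G \<Longrightarrow> x \<cdot> y = y \<cdot> x"
    and mult_assoc: "x \<in> G \<Longrightarrow> y \<in> G \<Longrightarrow> z \<in> G \<Longrightarrow> x \<cdot> y \<cdot> z = x \<cdot> (y \<cdot> z)"
    and mult_self: "x \<in> G \<Longrightarrow> x \<cdot> x = e"
begin

lemma mult_left_commute:
  "x \<in> G \<Longrightarrow> y \<in> G \<Longrightarrow> z \<in> G \<Longrightarrow> x \<cdot> (y \<cdot> z) = y \<cdot> (x \<cdot> z)"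
  by (metis mult_assoc mult_commute)

lemma mult_cancel_left: "x \<in> G \<Longrightarrow> y \<in> G \<Longrightarrow> x \<cdot> (x \<cdot> y) = y"
  by (metis left_unit mult_assoc mult_self)

definition subgroup :: "'a set \<Rightarrow> bool" where
  "subgroup H \<longleftrightarrow> H \<subseteq> G \<and> e \<in> H \<and> (\<forall>x\<in>H. \<forall>y\<in>H. x \<cdot> y \<in> H)"

lemma subgroup_coset_union:
  assumes H: "subgroup H" and g: "g \<in> G"
  shows "subgroup (H \<union> (\<cdot>) g ` H)"
proof -
  have HG: "\<And>h. h \<in> H \<Longrightarrow> h \<in> G" and closed: "\<And>x y. x \<in> H \<Longrightarrow> y \<in> H \<Longrightarrow> x \<cdot> y \<in> H"
    using H by (auto simp: subgroup_def)
  have "x \<cdot> y \<in> H \<union> (\<cdot>) g ` H" if "x \<in> H \<union> (\<cdot>) g ` H" "y \<in> H \<union> (\<cdot>) g ` H" for x y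
    using that
  proof (elim UnE imageE)
    assume "x \<in> H" "y \<in> H"
    then show ?thesis using closed by blast
  next
    fix h' assume "x \<in> H" "y = g \<cdot> h'" "h' \<in> H"
    then have "x \<cdot> y = g \<cdot> (x \<cdot> h')" using HG g by (simp add: mult_left_commute)
    then show ?thesis using closed \<open>x \<in> H\<close> \<open>h' \<in> H\<close> by blast
  next
    fix h assume "x = g \<cdot> h" "h \<in> H" "y \<in> H"
    then have "x \<cdot> y = g \<cdot> (h \<cdot> y)" using HG g by (simp add: mult_assoc)
    then show ?thesis using closed \<open>y \<in> H\<close> \<open>h \<in> H\<close> by blast
  next
    fix h h' assume "x = g \<cdot> h" "h \<in> H" "y = g \<cdot> h'" "h' \<in> H"
    then have "x \<cdot> y = h \<cdot> h'"
      using HG g by (simp add: mult_assoc mult_cancel_left mult_closed mult_left_commute)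
    then show ?thesis using closed \<open>h \<in> H\<close> \<open>h' \<in> H\<close> by simp
  qed
  then show ?thesis
    using H g by (auto simp: subgroup_def intro: mult_closed)
qed

lemma card_coset_union:
  assumes H: "subgroup H" "finite H" and g: "g \<in> G" "g \<notin> H"
  shows "card (H \<union> (\<cdot>) g ` H) = 2 * card H"
proof -
  have HG: "H \<subseteq> G" and closed: "\<And>x y. x \<in> H \<Longrightarrow> y \<in> H \<Longrightarrow> x \<cdot> y \<in> H"
    using H by (auto simp: subgroup_def)
  have inj: "inj_on ((\<cdot>) g) H"
    by (rule inj_on_inverseI[where g = "(\<cdot>) g"]) (use HG g in \<open>auto simp: mult_cancel_left\<close>)
  have "H \<inter> (\<cdot>) g ` H = {}"
  proof (rule ccontr)
    assume "H \<inter> (\<cdot>) g ` H \<noteq> {}"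
    then obtain h where h: "h \<in> H" "g \<cdot> h \<in> H" by blast
    then have "g = g \<cdot> h \<cdot> h"
      using HG g by (metis mult_commute mult_cancel_left subsetD)
    then show False using closed h g by metis
  qed
  then show ?thesis
    using H(2) inj by (simp add: card_Un_disjoint card_image)
qed

lemma card_power_of_two_from_subgroup:
  assumes "finite G" "subgroup H" "card H = 2 ^ k"
  shows "\<exists>p. card G = 2 ^ p"
  using assms(2,3)
proof (induction "card G - card H" arbitrary: H k rule: less_induct)
  case less
  then have HG: "H \<subseteq> G" and "e \<in> H" by (auto simp: subgroup_def)
  show ?case
  proof (cases "H = G")
    case True
    with less.prems show ?thesis by blast
  next
    case False
    then obtain g where g: "g \<in> G" "g \<notin> H" using HG by blast
    let ?H' = "H \<union> (\<cdot>) g ` H"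
    have sub: "subgroup ?H'" using subgroup_coset_union less.prems(1) g(1) .
    have fin: "finite H" using HG assms(1) finite_subset by blast
    have card: "card ?H' = 2 * card H"
      using card_coset_union[OF less.prems(1) fin g] .
    have "card ?H' \<le> card G"
      using sub assms(1) by (auto simp: subgroup_def intro: card_mono)
    moreover have "card H > 0" using fin \<open>e \<in> H\<close> card_gt_0_iff by blast
    ultimately have "card G - card ?H' < card G - card H"
      using card by linarith
    moreover have "card ?H' = 2 ^ Suc k" using card less.prems(2) by simp
    ultimately show ?thesis using less.hyps sub by blast
  qed
qed

theorem card_power_of_two:
  assumes "finite G"
  shows "\<exists>p. card G = 2 ^ p"
proof -
  have "subgroup {e}" using unit_closed by (simp add: subgroup_def mult_self)
  then show ?thesis using card_power_of_two_from_subgroup[OF assms, of "{e}" 0] by simp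
qed

end

locale quadrangle_latin_square =
  fixes V :: "'a set" and d :: "'a \<Rightarrow> 'a \<Rightarrow> 'b" and C :: "'b set" and e :: 'a
  assumes base: "e \<in> V"
    and row_bij: "v \<in> V \<Longrightarrow> bij_betw (d v) V C"
    and sym: "u \<in> V \<Longrightarrow> v \<in> V \<Longrightarrow> d u v = d v u"
    and diag: "u \<in> V \<Longrightarrow> v \<in> V \<Longrightarrow> d u u = d v v"
    and quadrangle_distinct: "distinct [a, b, x, y] \<Longrightarrow> a \<in> V \<Longrightarrow> b \<in> V \<Longrightarrow> x \<in> V \<Longrightarrow> y \<in> V \<Longrightarrow>
      d a b = d x y \<Longrightarrow> d a x = d b y"
begin

lemma row_inj: "v \<in> V \<Longrightarrow> u \<in> V \<Longrightarrow> u' \<in> V \<Longrightarrow> d v u = d v u' \<Longrightarrow> u = u'"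
  using row_bij by (meson bij_betw_imp_inj_on inj_onD)

lemma quadrangle:
  assumes V: "a \<in> V" "b \<in> V" "x \<in> V" "y \<in> V" and eq: "d a b = d x y"
  shows "d a x = d b y"
proof (cases "distinct [a, b, x, y]")
  case True
  then show ?thesis using quadrangle_distinct V eq by blast
next
  case False
  then consider "a = b" | "x = y" | "a = x" | "b = y" | "a = y" | "b = x" by auto
  then show ?thesis
  proof cases
    case 1
    then have "d x y = d x x" using eq diag[OF V(1) V(3)] by simp
    then have "y = x" using row_inj V by blast
    with 1 show ?thesis by simp
  next
    case 2
    then have "d a b = d a a" using eq diag[OF V(1) V(3)] by simp
    then have "b = a" using row_inj V by blast
    with 2 show ?thesis by simp
  next
    case 3
    then have "b = y" using eq row_inj V by blast
    with 3 show ?thesis using diag V by blast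
  next
    case 4
    then have "d b a = d b x" using eq sym[OF V(1,2)] sym[OF V(3,2)] by simp
    then have "a = x" using row_inj V by blast
    with 4 show ?thesis using diag V by blast
  next
    case 5
    then have "d a b = d a x" using eq sym[OF V(3,1)] by simp
    then have "b = x" using row_inj V by blast
    with 5 show ?thesis using sym V by blast
  next
    case 6
    then have "d b a = d b y" using eq sym[OF V(1,2)] by simp
    then have "a = y" using row_inj V by blast
    with 6 show ?thesis using sym V by blast
  qed
qed

definition cayley_mult :: "'a \<Rightarrow> 'a \<Rightarrow> 'a" where
  "cayley_mult x y = (THE u. u \<in> V \<and> d y u = d e x)"

lemma cayley_mult_spec:
  assumes "x \<in> V" "y \<in> V"
  shows "cayley_mult x y \<in> V \<and> d y (cayley_mult x y) = d e x"
proof -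
  have "d e x \<in> d y ` V"
    using row_bij[OF base] row_bij[OF assms(2)] assms(1) by (auto simp: bij_betw_def)
  then obtain u where u: "u \<in> V" "d y u = d e x" by (metis imageE)
  have "\<exists>!u. u \<in> V \<and> d y u = d e x"
  proof (rule ex1I[of _ u])
    show "\<And>u'. u' \<in> V \<and> d y u' = d e x \<Longrightarrow> u' = u"
      using row_inj[OF assms(2)] u by auto
  qed (use u in blast)
  then show ?thesis
    unfolding cayley_mult_def by (rule theI')
qed

lemma cayley_mult_eqI:
  assumes "x \<in> V" "y \<in> V" "u \<in> V" "d y u = d e x"
  shows "cayley_mult x y = u"
  using cayley_mult_spec[OF assms(1,2)] row_inj[OF assms(2)] assms(3,4) by auto

lemma cayley_mult_assoc:
  assumes V: "x \<in> V" "y \<in> V" "z \<in> V"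
  shows "cayley_mult (cayley_mult x y) z = cayley_mult x (cayley_mult y z)"
proof -
  define yz where "yz = cayley_mult y z"
  define xyz where "xyz = cayley_mult x yz"
  define xy where "xy = cayley_mult x y"
  have yz: "yz \<in> V" "d z yz = d e y" using cayley_mult_spec V yz_def by auto
  have xyz: "xyz \<in> V" "d yz xyz = d y xy" using cayley_mult_spec V yz xyz_def xy_def by auto
  have xy: "xy \<in> V" using cayley_mult_spec V xy_def by auto
  have "d z e = d yz y" using quadrangle[OF V(3) yz(1) base V(2) yz(2)] .
  also have "\<dots> = d xyz xy" using quadrangle[OF yz(1) xyz(1) V(2) xy xyz(2)] .
  finally have "d z xyz = d e xy" using quadrangle[OF V(3) base xyz(1) xy] by blast
  then show ?thesis
    using cayley_mult_eqI[OF xy V(3) xyz(1)] unfolding xyz_def yz_def xy_def by blast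
qed

sublocale boolean_group V cayley_mult e
proof
  fix x y assume V: "x \<in> V" "y \<in> V"
  show "cayley_mult x y \<in> V" using cayley_mult_spec V by blast
  show "cayley_mult e x = x" using cayley_mult_eqI[OF base V(1) V(1)] diag[OF V(1) base] .
  show "cayley_mult x x = e" using cayley_mult_eqI[OF V(1) V(1) base] sym[OF V(1) base] .
  obtain u: "cayley_mult x y \<in> V" "d y (cayley_mult x y) = d e x" using cayley_mult_spec V by blast
  then have "d y e = d (cayley_mult x y) x" using quadrangle[OF V(2) _ base V(1)] by blast
  then have "d x (cayley_mult x y) = d e y" using sym[OF V(2) base] sym[OF u(1) V(1)] by simp
  then show "cayley_mult x y = cayley_mult y x"
    using cayley_mult_eqI[OF V(2) V(1) u(1)] by simp
qed (use base cayley_mult_assoc in auto)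

end

lemma colours_spanned_four:
  assumes c: "edge_colouring s k c" and V: "a < s" "b < s" "x < s" "y < s"
    and dist: "distinct [a, b, x, y]"
  shows "colours_spanned c {a, b, x, y} = {c a b, c a x, c a y, c b x, c b y, c x y}"
proof -
  have "c u v = c v u" if "u < s" "v < s" "u \<noteq> v" for u v
    using c that by (simp add: edge_colouring_def)
  then show ?thesis
    using V dist unfolding colours_spanned_def by auto
qed

lemma matching_colouring_quadrangle:
  assumes c: "edge_colouring s k c" and m: "classes_are_matchings s c"
    and V: "a < s" "b < s" "x < s" "y < s" and dist: "distinct [a, b, x, y]"
    and four: "card (colours_spanned c {a, b, x, y}) = 3 \<or> card (colours_spanned c {a, b, x, y}) = 6"
    and eq: "c a b = c x y"
  shows "c a x = c b y"
proof (rule ccontr)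
  \<comment> \<open>The four points span at most five colours, hence exactly three; but otherwise the
    colours of ab, ax, ay and by are pairwise different.\<close>
  assume ne: "c a x \<noteq> c b y"
  have sym: "c u v = c v u" if "u < s" "v < s" "u \<noteq> v" for u v
    using c that by (simp add: edge_colouring_def)
  have proper: "c u v \<noteq> c u w" if "u < s" "v < s" "w < s" "distinct [u, v, w]" for u v w
    using m that by (simp add: classes_are_matchings_def)
  have spanned: "colours_spanned c {a, b, x, y} = {c a b, c a x, c a y, c b x, c b y}"
    using colours_spanned_four[OF c V dist] eq by auto
  then have "card (colours_spanned c {a, b, x, y}) \<le> 5"
    using card_length[of "[c a b, c a x, c a y, c b x, c b y]"] by simp
  with four have three: "card (colours_spanned c {a, b, x, y}) = 3" by linarith
  have "c a b \<noteq> c a x" "c a b \<noteq> c a y" "c a x \<noteq> c a y"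
    using proper V dist by auto
  moreover have "c a b \<noteq> c b y" using proper[of b a y] sym[of a b] V dist by auto
  moreover have "c a y \<noteq> c b y" using proper[of y a b] sym[of a y] sym[of b y] V dist by auto
  ultimately have "card {c a b, c a x, c a y, c b y} = 4" using ne by simp
  moreover have "card {c a b, c a x, c a y, c b y} \<le> card (colours_spanned c {a, b, x, y})"
    by (rule card_mono) (auto simp: spanned)
  ultimately show False using three by linarith
qed

definition completed_colouring :: "nat \<Rightarrow> (nat \<Rightarrow> nat \<Rightarrow> nat) \<Rightarrow> nat \<Rightarrow> nat \<Rightarrow> nat" where
  "completed_colouring s c u v = (if u = v then s - 1 else c u v)"

lemma completed_colouring_row_bij:
  assumes c: "edge_colouring s (s - 1) c" and m: "classes_are_matchings s c" and v: "v < s"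
  shows "bij_betw (completed_colouring s c v) {..<s} {..<s}"
proof -
  have edge: "c v u < s - 1" if "u < s" "u \<noteq> v" for u
    using c v that by (simp add: edge_colouring_def)
  have inj: "inj_on (completed_colouring s c v) {..<s}"
  proof (rule inj_onI)
    fix u u' assume "u \<in> {..<s}" "u' \<in> {..<s}"
      and "completed_colouring s c v u = completed_colouring s c v u'"
    then show "u = u'"
      using edge m v unfolding completed_colouring_def classes_are_matchings_def
      by (fastforce split: if_splits)
  qed
  moreover have "completed_colouring s c v ` {..<s} \<subseteq> {..<s}"
    using edge v by (fastforce simp: completed_colouring_def)
  ultimately show ?thesis
    by (simp add: bij_betw_def endo_inj_surj)
qed

lemma completed_colouring_latin_square:
  assumes "s > 0"
    and c: "edge_colouring s (s - 1) c"
    and m: "classes_are_matchings s c"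
    and four: "\<forall>X. X \<subseteq> {..<s} \<and> card X = 4 \<longrightarrow>
           card (colours_spanned c X) = 3 \<or> card (colours_spanned c X) = 6"
  shows "quadrangle_latin_square {..<s} (completed_colouring s c) {..<s} 0"
proof
  fix a b x y assume dist: "distinct [a, b, x, y]"
    and V: "a \<in> {..<s}" "b \<in> {..<s}" "x \<in> {..<s}" "y \<in> {..<s}"
    and eq: "completed_colouring s c a b = completed_colouring s c x y"
  have "card {a, b, x, y} = 4" using dist by simp
  then have "card (colours_spanned c {a, b, x, y}) = 3 \<or> card (colours_spanned c {a, b, x, y}) = 6"
    using four V by auto
  then show "completed_colouring s c a x = completed_colouring s c b y"
    using matching_colouring_quadrangle[OF c m _ _ _ _ dist] V eq dist
    by (simp add: completed_colouring_def)
qed (use assms completed_colouring_row_bij in \<open>auto simp: completed_colouring_def edge_colouring_def\<close>)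

theorem lemma4p2:
  fixes s :: nat and c :: "nat \<Rightarrow> nat \<Rightarrow> nat"
  assumes "s \<ge> 2"
    and "edge_colouring s (s - 1) c"
    and "classes_are_matchings s c"
    and "\<forall>X. X \<subseteq> {..<s} \<and> card X = 4 \<longrightarrow>
           card (colours_spanned c X) = 3 \<or> card (colours_spanned c X) = 6"
  shows "\<exists>p::nat. s = 2 ^ p"
proof -
  interpret quadrangle_latin_square "{..<s}" "completed_colouring s c" "{..<s}" 0
    using completed_colouring_latin_square assms by simp
  show ?thesis using card_power_of_two by simp
qed

end
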